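(* Let $G$ be a finitely generated group and let $S$ and $S'$ be finite generating sets of $G$, each closed under inverses. Then there is a constant $K$ such that $\Delta_S(n)\le K\,\Delta_{S'}(Kn)+K$ for all $n\ge1$.
   Context: For a finite generating set $T$ of $G$ closed under inverses, $\Gamma_T$ is the Cayley diagram (edge labelled $t$ from $g$ to $gt$), with word metric $d_T(g,g')$ = length of a shortest word in $T$ representing $g^{-1}g'$. A cycle of length $n\ge1$ in $\Gamma_T$ is a sequence $g_0,\dots,g_n$ in $G$ with an edge from each $g_{i-1}$ to $g_i$ and $g_n=g_0$. A (diagonal) triangulation of a circle: distinguish one or more points on the circle and join some of them by chords such that no two chords meet in the interior, the interior is divided into triangles, and each arc between neighbouring distinguished points is a side of a triangle; circles with at most three distinguished points count as triangulated with no chords. A triangulation of the cycle $g_0,\dots,g_n$ is such a triangulation of a circle with distinguished points $p_1,\dots,p_n$ labelled $g_1,\dots,g_n$ counterclockwise; a chord from $p_i$ to $p_j$ has length $d_T(g_i,g_j)$; a $k$-triangulation has all chord lengths $\le k$. $\Delta_T(n)$ is the least $k$ such that every cycle of length at most $n$ in $\Gamma_T$ has a $k$-triangulation. *)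

theory Defs
  imports "HOL-Algebra.Group" "HOL-Algebra.Generated_Groups"
begin

definition word_prod :: "('a, 'b) monoid_scheme \<Rightarrow> 'a list \<Rightarrow> 'a" where
  "word_prod G w = foldr (\<lambda>t acc. t \<otimes>\<^bsub>G\<^esub> acc) w \<one>\<^bsub>G\<^esub>"

definition word_dist :: "('a, 'b) monoid_scheme \<Rightarrow> 'a set \<Rightarrow> 'a \<Rightarrow> 'a \<Rightarrow> nat" where
  "word_dist G T g g' =
     (LEAST n. \<exists>w. set w \<subseteq> T \<and> length w = n \<and> word_prod G w = inv\<^bsub>G\<^esub> g \<otimes>\<^bsub>G\<^esub> g')"

definition cayley_cycle :: "('a, 'b) monoid_scheme \<Rightarrow> 'a set \<Rightarrow> (nat \<Rightarrow> 'a) \<Rightarrow> nat \<Rightarrow> bool" where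
  "cayley_cycle G T g n \<longleftrightarrow> 1 \<le> n \<and> (\<forall>i\<le>n. g i \<in> carrier G) \<and>
     (\<forall>i\<in>{1..n}. \<exists>t\<in>T. g i = g (i - 1) \<otimes>\<^bsub>G\<^esub> t) \<and> g n = g 0"

text \<open>Diagonal triangulations of the polygon with consecutive vertices i, i+1, ..., j,
  whose side (i,j) is already present (as an arc or as a chord drawn before).
  The set D is the set of chords (i',j') with i' < j'.  The polygon is split by the
  triangle (i,k,j) containing the side (i,j); sides of that triangle that are not arcs
  between neighbouring points are chords.\<close>
inductive poly_tri :: "nat \<Rightarrow> nat \<Rightarrow> (nat \<times> nat) set \<Rightarrow> bool" where
  small: "j \<le> Suc i \<Longrightarrow> poly_tri i j {}"
| split: "i < k \<Longrightarrow> k < j \<Longrightarrow> poly_tri i k D1 \<Longrightarrow> poly_tri k j D2 \<Longrightarrow>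
     poly_tri i j (D1 \<union> D2 \<union> (if Suc i < k then {(i, k)} else {})
                          \<union> (if Suc k < j then {(k, j)} else {}))"

text \<open>A triangulation of a circle with distinguished points p_1, ..., p_n (counterclockwise):
  chord sets D with poly_tri 1 n D.  (For n \<le> 3 this forces D = {}.)\<close>
definition circle_triangulation :: "nat \<Rightarrow> (nat \<times> nat) set \<Rightarrow> bool" where
  "circle_triangulation n D \<longleftrightarrow> poly_tri 1 n D"

definition has_k_triangulation ::
  "('a, 'b) monoid_scheme \<Rightarrow> 'a set \<Rightarrow> (nat \<Rightarrow> 'a) \<Rightarrow> nat \<Rightarrow> nat \<Rightarrow> bool" where
  "has_k_triangulation G T g n k \<longleftrightarrow>
     (\<exists>D. circle_triangulation n D \<and> (\<forall>(i, j)\<in>D. word_dist G T (g i) (g j) \<le> k))"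

definition Delta :: "('a, 'b) monoid_scheme \<Rightarrow> 'a set \<Rightarrow> nat \<Rightarrow> nat" where
  "Delta G T n = (LEAST k. \<forall>g m. m \<le> n \<longrightarrow> cayley_cycle G T g m \<longrightarrow> has_k_triangulation G T g m k)"

end

theory Submission
  imports Defs
begin

text \<open>Subdivide every edge of a cycle of length at most n in the Cayley graph of S into a
  nonempty S'-word of length at most L.  This gives a cycle of length at most L n in the
  Cayley graph of S', which has a triangulation whose chords have S'-length at most
  Delta_{S'}(L n).  Sending each vertex of the subdivided cycle to the endpoint of the S-edge it lies
  on is monotone and advances by at most one step, so it maps this triangulation onto a
  triangulation of the original cycle, degenerate triangles collapsing.  Every chord of the
  image joins two vertices within S'-distance L of the ends of a chord or side of the fine
  triangulation, so its S'-length is at most 2L + 1 + Delta_{S'}(L n), and its S-length is at most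
  M times that, where M bounds the S-length of the elements of S'.\<close>

section \<open>Triangulations of polygons\<close>

lemma poly_tri_range: "poly_tri i j D \<Longrightarrow> (a, b) \<in> D \<Longrightarrow> i \<le> a \<and> a < b \<and> b \<le> j"
  by (induction rule: poly_tri.induct) (auto split: if_splits)

lemma poly_tri_exists: "\<exists>D. poly_tri i j D"
proof (induction j)
  case 0
  show ?case using poly_tri.small by blast
next
  case (Suc j)
  show ?case
  proof (cases "j \<le> i")
    case True
    then show ?thesis using poly_tri.small[of "Suc j" i] by auto
  next
    case False
    obtain D where "poly_tri i j D" using Suc.IH ..
    moreover have "poly_tri j (Suc j) {}" by (rule poly_tri.small) simp
    ultimately show ?thesis
      using poly_tri.split[of i j "Suc j"] False by (meson lessI not_le)
  qed
qed

lemma poly_tri_image: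
  assumes "poly_tri i j D'" "i \<le> j" "mono_on {i..j} \<phi>"
    and "\<And>a. i \<le> a \<Longrightarrow> a < j \<Longrightarrow> \<phi> (Suc a) \<le> Suc (\<phi> a)"
  shows "\<exists>D. poly_tri (\<phi> i) (\<phi> j) D \<and>
    D \<subseteq> (\<lambda>(a, b). (\<phi> a, \<phi> b)) ` (D' \<union> {(a, Suc a) | a. i \<le> a \<and> a < j})"
  using assms
proof (induction rule: poly_tri.induct)
  case (small j i)
  then consider "j = i" | "j = Suc i" by linarith
  then have "\<phi> j \<le> Suc (\<phi> i)"
    by cases (use small.prems(3) in auto)
  then show ?case using poly_tri.small by blast
next
  case (split i k j D1 D2)
  define D where "D = D1 \<union> D2 \<union> (if Suc i < k then {(i, k)} else {})
                          \<union> (if Suc k < j then {(k, j)} else {})"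
  let ?img = "\<lambda>D' i j. (\<lambda>(a, b). (\<phi> a, \<phi> b)) ` (D' \<union> {(a, Suc a) | a. i \<le> a \<and> a < j})"
  have mono: "mono_on {i..k} \<phi>" "mono_on {k..j} \<phi>"
    using split.prems(2) split.hyps(1,2) by (auto elim: mono_on_subset)
  obtain E1 where E1: "poly_tri (\<phi> i) (\<phi> k) E1" "E1 \<subseteq> ?img D1 i k"
    using split.IH(1) split.hyps(1,2) mono(1) split.prems(3) by force
  obtain E2 where E2: "poly_tri (\<phi> k) (\<phi> j) E2" "E2 \<subseteq> ?img D2 k j"
    using split.IH(2) split.hyps(1,2) mono(2) split.prems(3) by force
  have sub: "?img D1 i k \<subseteq> ?img D i j" "?img D2 k j \<subseteq> ?img D i j"
    using split.hyps(1,2) unfolding D_def by (auto 0 4)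
  have sides: "(\<phi> i, \<phi> k) \<in> ?img D i j" "(\<phi> k, \<phi> j) \<in> ?img D i j"
    using split.hyps(1,2) unfolding D_def by (force split: if_splits)+
  have "\<phi> i \<le> \<phi> k" "\<phi> k \<le> \<phi> j"
    using split.prems(2) split.hyps(1,2) by (auto elim!: mono_onD)
  then consider "\<phi> i = \<phi> k" | "\<phi> k = \<phi> j" | "\<phi> i < \<phi> k" "\<phi> k < \<phi> j"
    by linarith
  then have "\<exists>E. poly_tri (\<phi> i) (\<phi> j) E \<and> E \<subseteq> ?img D i j"
  proof cases
    case 1
    then show ?thesis using E2(1) subset_trans[OF E2(2) sub(2)] by auto
  next
    case 2
    then show ?thesis using E1(1) subset_trans[OF E1(2) sub(1)] by auto
  next
    case 3
    let ?E = "E1 \<union> E2 \<union> (if Suc (\<phi> i) < \<phi> k then {(\<phi> i, \<phi> k)} else {})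
                      \<union> (if Suc (\<phi> k) < \<phi> j then {(\<phi> k, \<phi> j)} else {})"
    have "poly_tri (\<phi> i) (\<phi> j) ?E"
      using poly_tri.split[OF 3 E1(1) E2(1)] .
    moreover have "?E \<subseteq> ?img D i j"
      using E1(2) E2(2) sub sides by auto
    ultimately show ?thesis by blast
  qed
  then show ?case unfolding D_def .
qed

section \<open>Reindexing along a subdivision\<close>

lemma strict_mono_on_atMost_SucI:
  fixes f :: "nat \<Rightarrow> 'a::order"
  assumes "\<And>n. n < N \<Longrightarrow> f n < f (Suc n)"
  shows "strict_mono_on {..N} f"
proof (rule strict_mono_onI)
  fix a b assume ab: "a \<in> {..N}" "b \<in> {..N}" "a < b"
  then have "{a..<b} \<subseteq> {..<N}"
    by auto
  then show "f a < f b"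
    using lift_Suc_mono_less_ivl[of "{..<N}" f a b] assms ab(3) by blast
qed

text \<open>If p a is the position of the a-th vertex of a cycle after subdividing its edges, then
  upper_inverse p j is the index of the vertex that ends the subdivided edge containing position j.\<close>

definition upper_inverse :: "(nat \<Rightarrow> nat) \<Rightarrow> nat \<Rightarrow> nat" where
  "upper_inverse p j = (LEAST a. j \<le> p a)"

lemma upper_inverse_le:
  assumes "j \<le> p N"
  shows "j \<le> p (upper_inverse p j)" and "upper_inverse p j \<le> N"
  using assms unfolding upper_inverse_def by (auto intro: LeastI Least_le)

lemma upper_inverse_mono:
  assumes "j \<le> j'" "j' \<le> p N"
  shows "upper_inverse p j \<le> upper_inverse p j'"
  using assms upper_inverse_le(1)[of j' p N] unfolding upper_inverse_def[of p j]
  by (auto intro: Least_le)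

lemma upper_inverse_pos:
  assumes "p 0 = 0" "0 < j" "j \<le> p N"
  shows "0 < upper_inverse p j" and "p (upper_inverse p j - 1) < j"
proof -
  show pos: "0 < upper_inverse p j"
    using assms upper_inverse_le(1)[of j p N] by (cases "upper_inverse p j") auto
  have "\<not> j \<le> p (upper_inverse p j - 1)"
    unfolding upper_inverse_def by (rule not_less_Least) (use pos in \<open>simp add: upper_inverse_def\<close>)
  then show "p (upper_inverse p j - 1) < j" by simp
qed

lemma upper_inverse_eqI:
  assumes "strict_mono_on {..N} p" "0 < a" "a \<le> N" "p (a - 1) < j" "j \<le> p a"
  shows "upper_inverse p j = a"
  unfolding upper_inverse_def
proof (rule Least_equality)
  show "j \<le> p a" by fact
  fix b assume "j \<le> p b"
  show "a \<le> b"
  proof (rule ccontr)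
    assume "\<not> a \<le> b"
    then have "p b \<le> p (a - 1)"
      using assms(1,3) by (intro strict_mono_on_leD[OF assms(1)]) auto
    with \<open>j \<le> p b\<close> assms(4) show False by simp
  qed
qed

lemma upper_inverse_Suc_le:
  assumes "strict_mono_on {..N} p" "Suc j \<le> p N"
  shows "upper_inverse p (Suc j) \<le> Suc (upper_inverse p j)"
proof -
  let ?a = "upper_inverse p j"
  have a: "j \<le> p ?a" "?a \<le> N"
    using assms(2) upper_inverse_le[of j p N] by auto
  show ?thesis
  proof (cases "?a < N")
    case True
    then have "Suc j \<le> p (Suc ?a)"
      using a strict_mono_onD[OF assms(1), of ?a "Suc ?a"] by simp
    then show ?thesis
      unfolding upper_inverse_def[of p "Suc j"] by (rule Least_le)
  next
    case False
    then have "Suc j \<le> p ?a"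
      using a assms(2) by simp
    then have "upper_inverse p (Suc j) \<le> ?a"
      unfolding upper_inverse_def[of p "Suc j"] by (rule Least_le)
    then show ?thesis by simp
  qed
qed

lemma upper_inverse_gap:
  assumes "p 0 = 0" "0 < j" "j \<le> p N" "\<And>a. a < N \<Longrightarrow> p (Suc a) \<le> p a + L"
  shows "p (upper_inverse p j) < j + L"
proof -
  let ?a = "upper_inverse p j"
  have "0 < ?a" "p (?a - 1) < j"
    using upper_inverse_pos[OF assms(1-3)] by auto
  moreover have "?a \<le> N"
    using upper_inverse_le(2)[of j p N, OF assms(3)] .
  ultimately have "?a - 1 < N" "Suc (?a - 1) = ?a"
    by auto
  then have "p ?a \<le> p (?a - 1) + L"
    using assms(4)[of "?a - 1"] by simp
  with \<open>p (?a - 1) < j\<close> show ?thesis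
    by simp
qed

lemma poly_tri_upper_inverse_image:
  assumes "poly_tri 1 (p N) D'" "1 \<le> p N" "p 0 = 0" "strict_mono_on {..N} p"
  obtains D where "poly_tri 1 N D"
    "D \<subseteq> (\<lambda>(a, b). (upper_inverse p a, upper_inverse p b)) `
      (D' \<union> {(a, Suc a) | a. 1 \<le> a \<and> a < p N})"
proof -
  have N: "0 < N"
    using assms(2,3) by (cases N) auto
  have first: "upper_inverse p 1 = 1"
    using N assms(3) strict_mono_onD[OF assms(4), of 0 1] by (intro upper_inverse_eqI[OF assms(4)]) auto
  have last: "upper_inverse p (p N) = N"
    using N strict_mono_onD[OF assms(4), of "N - 1" N] by (intro upper_inverse_eqI[OF assms(4)]) auto
  have mono: "mono_on {1..p N} (upper_inverse p)"
    by (rule mono_onI) (auto intro: upper_inverse_mono)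
  have step: "upper_inverse p (Suc a) \<le> Suc (upper_inverse p a)" if "1 \<le> a" "a < p N" for a
    using that by (intro upper_inverse_Suc_le[OF assms(4)]) simp
  show thesis
    using poly_tri_image[OF assms(1,2) mono step] that unfolding first last by blast
qed

section \<open>Words, subdivided cycles and Delta\<close>

lemma word_prod_Nil [simp]: "word_prod G [] = \<one>\<^bsub>G\<^esub>"
  by (simp add: word_prod_def)

lemma word_prod_Cons [simp]: "word_prod G (t # w) = t \<otimes>\<^bsub>G\<^esub> word_prod G w"
  by (simp add: word_prod_def)

lemma word_dist_le:
  "set w \<subseteq> T \<Longrightarrow> word_prod G w = inv\<^bsub>G\<^esub> g \<otimes>\<^bsub>G\<^esub> g' \<Longrightarrow>
    word_dist G T g g' \<le> length w"
  unfolding word_dist_def by (rule Least_le) auto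

lemma Delta_le:
  assumes "\<And>g m. m \<le> n \<Longrightarrow> cayley_cycle G T g m \<Longrightarrow> has_k_triangulation G T g m k"
  shows "Delta G T n \<le> k"
  unfolding Delta_def by (rule Least_le) (use assms in blast)

context group
begin

lemma word_prod_closed: "set w \<subseteq> carrier G \<Longrightarrow> word_prod G w \<in> carrier G"
  by (induction w) auto

lemma word_prod_append:
  "set v \<subseteq> carrier G \<Longrightarrow> set w \<subseteq> carrier G \<Longrightarrow>
    word_prod G (v @ w) = word_prod G v \<otimes> word_prod G w"
  by (induction v) (auto simp: m_assoc word_prod_closed)

lemma word_prod_rev_inv:
  "set w \<subseteq> carrier G \<Longrightarrow> word_prod G (rev (map (\<lambda>s. inv s) w)) = inv (word_prod G w)"
proof (induction w)
  case (Cons t w)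
  have "set (rev (map (\<lambda>s. inv s) w)) \<subseteq> carrier G"
    using Cons.prems by auto
  then show ?case
    using Cons by (simp add: word_prod_append word_prod_closed inv_mult_group)
qed simp

lemma word_dist_mult_left:
  assumes "h \<in> carrier G" "g \<in> carrier G" "g' \<in> carrier G"
  shows "word_dist G T (h \<otimes> g) (h \<otimes> g') = word_dist G T g g'"
proof -
  have "inv (h \<otimes> g) \<otimes> (h \<otimes> g') = inv g \<otimes> g'"
    using assms by (simp add: inv_mult_group m_assoc[symmetric]) (simp add: m_assoc)
  then show ?thesis by (simp add: word_dist_def)
qed

lemma word_dist_cycle_le:
  assumes "T \<subseteq> carrier G" "cayley_cycle G T g n" "i \<le> j" "j \<le> n"
  shows "word_dist G T (g i) (g j) \<le> j - i"
proof -
  have carrier: "\<And>k. k \<le> n \<Longrightarrow> g k \<in> carrier G"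
    using assms(2) by (simp add: cayley_cycle_def)
  have "\<exists>w. set w \<subseteq> T \<and> length w = j - i \<and> word_prod G w = inv (g i) \<otimes> g j"
    using assms(3,4)
  proof (induction j rule: dec_induct)
    case base
    then show ?case using carrier by (intro exI[of _ "[]"]) simp
  next
    case (step k)
    then obtain w where w: "set w \<subseteq> T" "length w = k - i" "word_prod G w = inv (g i) \<otimes> g k"
      by auto
    have "Suc k \<in> {1..n}"
      using step by simp
    then obtain t where t: "t \<in> T" "g (Suc k) = g k \<otimes> t"
      using assms(2) unfolding cayley_cycle_def by (metis diff_Suc_1)
    have "set w \<subseteq> carrier G" "t \<in> carrier G"
      using w(1) t(1) assms(1) by auto
    then have "word_prod G (w @ [t]) = word_prod G w \<otimes> t"
      by (simp add: word_prod_append)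
    also have "\<dots> = inv (g i) \<otimes> g (Suc k)"
      using w(3) t(2) \<open>t \<in> carrier G\<close> carrier step.prems step.hyps by (simp add: m_assoc)
    finally have "word_prod G (w @ [t]) = inv (g i) \<otimes> g (Suc k)" .
    then show ?case
      using w t step.hyps by (intro exI[of _ "w @ [t]"]) auto
  qed
  then show ?thesis by (auto dest: word_dist_le)
qed

lemma cayley_cycle_of_word:
  assumes "T \<subseteq> carrier G" "g \<in> carrier G" "set w \<subseteq> T" "w \<noteq> []" "word_prod G w = \<one>"
  shows "cayley_cycle G T (\<lambda>j. g \<otimes> word_prod G (take j w)) (length w)"
proof -
  have prefix_carrier: "set (take j w) \<subseteq> carrier G" for j
    using assms(1,3) set_take_subset[of j w] by blast
  have "g \<otimes> word_prod G (take j w) = g \<otimes> word_prod G (take (j - 1) w) \<otimes> w ! (j - 1)"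
    if "j \<in> {1..length w}" for j
  proof -
    have "take j w = take (j - 1) w @ [w ! (j - 1)]"
      using that take_Suc_conv_app_nth[of "j - 1" w] by (cases j) auto
    moreover have "w ! (j - 1) \<in> carrier G"
      using that assms(1,3) nth_mem[of "j - 1" w] by force
    ultimately show ?thesis
      using prefix_carrier[of "j - 1"] assms(2)
      by (simp add: word_prod_append word_prod_closed m_assoc)
  qed
  moreover have "w ! (j - 1) \<in> T" if "j \<in> {1..length w}" for j
    using that assms(3) nth_mem[of "j - 1" w] by force
  ultimately show ?thesis
    unfolding cayley_cycle_def
    using assms(2,4,5) prefix_carrier word_prod_closed by (auto simp: Suc_le_eq)
qed

lemma word_prod_concat_telescope:
  assumes "\<And>i. i \<le> a \<Longrightarrow> x i \<in> carrier G"
    and "\<And>i. 1 \<le> i \<Longrightarrow> i \<le> a \<Longrightarrow>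
      set (u i) \<subseteq> carrier G \<and> word_prod G (u i) = inv (x (i - 1)) \<otimes> x i"
  shows "word_prod G (concat (map u [1..<Suc a])) = inv (x 0) \<otimes> x a"
  using assms
proof (induction a)
  case 0
  then show ?case by simp
next
  case (Suc a)
  have "word_prod G (concat (map u [1..<Suc a])) = inv (x 0) \<otimes> x a"
    using Suc by simp
  moreover have "set (concat (map u [1..<Suc a])) \<subseteq> carrier G" "set (u (Suc a)) \<subseteq> carrier G"
    using Suc.prems(2) by force+
  ultimately have "word_prod G (concat (map u [1..<Suc (Suc a)]))
      = (inv (x 0) \<otimes> x a) \<otimes> (inv (x a) \<otimes> x (Suc a))"
    using Suc.prems(2)[of "Suc a"] by (simp add: word_prod_append)
  also have "\<dots> = inv (x 0) \<otimes> x (Suc a)"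
    using Suc.prems(1)[of 0] Suc.prems(1)[of a] Suc.prems(1)[of "Suc a"]
    by (simp add: m_assoc[symmetric]) (simp add: m_assoc)
  finally show ?case .
qed

lemma cayley_cycle_subdivision:
  assumes "T \<subseteq> carrier G" "1 \<le> N" "\<And>i. i \<le> N \<Longrightarrow> x i \<in> carrier G" "x N = x 0"
    and u: "\<And>i. 1 \<le> i \<Longrightarrow> i \<le> N \<Longrightarrow>
      set (u i) \<subseteq> T \<and> u i \<noteq> [] \<and> word_prod G (u i) = inv (x (i - 1)) \<otimes> x i"
  obtains y p where "cayley_cycle G T y (p N)" "p 0 = 0" "strict_mono_on {..N} p"
    "\<And>a. a < N \<Longrightarrow> p (Suc a) = p a + length (u (Suc a))" "\<And>a. a \<le> N \<Longrightarrow> y (p a) = x a"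
proof -
  define cw where "cw a = concat (map u [1..<Suc a])" for a
  define p where "p a = length (cw a)" for a
  define y where "y j = x 0 \<otimes> word_prod G (take j (cw N))" for j
  have cw_Suc: "cw (Suc a) = cw a @ u (Suc a)" for a
    by (simp add: cw_def)
  have p_0: "p 0 = 0" and p_Suc: "p (Suc a) = p a + length (u (Suc a))" for a
    by (simp_all add: p_def cw_def)
  have cw_T: "set (cw N) \<subseteq> T"
    using u by (force simp: cw_def)
  have cw_prod: "word_prod G (cw a) = inv (x 0) \<otimes> x a" if "a \<le> N" for a
  proof -
    have "set (u i) \<subseteq> carrier G \<and> word_prod G (u i) = inv (x (i - 1)) \<otimes> x i"
      if "1 \<le> i" "i \<le> a" for i
      using u[of i] that \<open>a \<le> N\<close> assms(1) by auto
    then show ?thesis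
      unfolding cw_def using that assms(3) by (intro word_prod_concat_telescope) auto
  qed
  have cw_prefix: "take (p a) (cw N) = cw a" if "a \<le> N" for a
  proof -
    have "\<exists>r. cw N = cw a @ r"
      using that by (induction N rule: dec_induct) (auto simp: cw_Suc)
    then show ?thesis by (auto simp: p_def)
  qed
  have p_strict: "strict_mono_on {..N} p"
    using u by (intro strict_mono_on_atMost_SucI) (simp add: p_Suc)
  have y_p: "y (p a) = x a" if "a \<le> N" for a
  proof -
    have "y (p a) = x 0 \<otimes> (inv (x 0) \<otimes> x a)"
      using that by (simp add: y_def cw_prefix cw_prod)
    also have "\<dots> = x a"
      using that assms(3)[of 0] assms(3)[of a] by (simp add: m_assoc[symmetric])
    finally show ?thesis .
  qed
  have "cw N \<noteq> []"
    using strict_mono_onD[OF p_strict, of 0 N] assms(2) by (auto simp: p_def cw_def)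
  then have cycle: "cayley_cycle G T y (p N)"
    using cayley_cycle_of_word[OF assms(1) assms(3)[of 0] cw_T] cw_prod[of N] assms(3,4)
    unfolding y_def p_def by simp
  show thesis
    using that[OF cycle p_0 p_strict p_Suc y_p] .
qed

lemma cayley_cycle_edge_words:
  assumes "T \<subseteq> carrier G" "cayley_cycle G S x N"
    and words: "\<And>s. s \<in> S \<Longrightarrow>
      \<exists>w. set w \<subseteq> T \<and> w \<noteq> [] \<and> length w \<le> L \<and> word_prod G w = s"
  obtains u where "\<And>i. 1 \<le> i \<Longrightarrow> i \<le> N \<Longrightarrow>
    set (u i) \<subseteq> T \<and> u i \<noteq> [] \<and> length (u i) \<le> L \<and>
    word_prod G (u i) = inv (x (i - 1)) \<otimes> x i"
proof -
  have "\<exists>w. set w \<subseteq> T \<and> w \<noteq> [] \<and> length w \<le> L \<and>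
      word_prod G w = inv (x (i - 1)) \<otimes> x i"
    if i: "1 \<le> i" "i \<le> N" for i
  proof -
    have "i \<in> {1..N}"
      using i by simp
    then obtain s where s: "s \<in> S" "x i = x (i - 1) \<otimes> s"
      using assms(2) unfolding cayley_cycle_def by blast
    obtain w where w: "set w \<subseteq> T" "w \<noteq> []" "length w \<le> L" "word_prod G w = s"
      using words[OF s(1)] by blast
    have "s \<in> carrier G" "x (i - 1) \<in> carrier G"
      using w(1,4) assms(1,2) word_prod_closed i(2) unfolding cayley_cycle_def by auto
    then have "inv (x (i - 1)) \<otimes> x i = s"
      using s(2) by (simp add: m_assoc[symmetric])
    then show ?thesis
      using w by auto
  qed
  then show thesis
    using that by metis
qed

lemma word_dist_upper_inverse_le:
  assumes "T \<subseteq> carrier G" "cayley_cycle G T y (p N)"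
    and "p 0 = 0" "strict_mono_on {..N} p" "\<And>a. a < N \<Longrightarrow> p (Suc a) \<le> p a + L"
    and "1 \<le> j" "j \<le> p N"
  shows "word_dist G T (y j) (y (p (upper_inverse p j))) \<le> L"
proof -
  have "j \<le> p (upper_inverse p j)" "upper_inverse p j \<le> N"
    using upper_inverse_le[of j p N] assms(7) by auto
  moreover have "p (upper_inverse p j) < j + L"
    using upper_inverse_gap[OF assms(3) _ assms(7,5)] assms(6) by simp
  ultimately show ?thesis
    using word_dist_cycle_le[OF assms(1,2), of j "p (upper_inverse p j)"]
      strict_mono_on_leD[OF assms(4), of "upper_inverse p j" N]
    by auto
qed

lemma has_k_triangulation_cycle_length:
  assumes "T \<subseteq> carrier G" "cayley_cycle G T g n" "n \<le> k"
  shows "has_k_triangulation G T g n k"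
proof -
  obtain D where D: "poly_tri 1 n D"
    using poly_tri_exists by blast
  have "word_dist G T (g a) (g b) \<le> k" if "(a, b) \<in> D" for a b
  proof -
    have "a < b" "b \<le> n"
      using poly_tri_range[OF D that] by auto
    then show ?thesis
      using word_dist_cycle_le[OF assms(1,2), of a b] assms(3) by linarith
  qed
  then show ?thesis
    using D unfolding has_k_triangulation_def circle_triangulation_def by blast
qed

lemma has_k_triangulation_Delta:
  assumes "T \<subseteq> carrier G" "m \<le> n" "cayley_cycle G T g m"
  shows "has_k_triangulation G T g m (Delta G T n)"
proof -
  have "\<exists>k. \<forall>g m. m \<le> n \<longrightarrow> cayley_cycle G T g m \<longrightarrow> has_k_triangulation G T g m k"
    using has_k_triangulation_cycle_length[OF assms(1)] by blast
  from LeastI_ex[OF this] show ?thesis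
    using assms(2,3) unfolding Delta_def by blast
qed

lemma Delta_mono:
  assumes "T \<subseteq> carrier G" "n \<le> n'"
  shows "Delta G T n \<le> Delta G T n'"
  using assms by (intro Delta_le has_k_triangulation_Delta) auto

lemma Delta_trivial_group:
  assumes "carrier G = {\<one>}"
  shows "Delta G T n = 0"
proof -
  have "has_k_triangulation G T g m 0" if "cayley_cycle G T g m" for g m
  proof -
    obtain D where D: "poly_tri 1 m D"
      using poly_tri_exists by blast
    have "word_dist G T (g a) (g b) \<le> 0" if "(a, b) \<in> D" for a b
    proof -
      have "g a = \<one>" "g b = \<one>"
        using \<open>cayley_cycle G T g m\<close> poly_tri_range[OF D that] assms
        unfolding cayley_cycle_def by auto
      then show ?thesis
        using word_dist_le[of "[]" T G "g a" "g b"] by simp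
    qed
    then show ?thesis
      using D unfolding has_k_triangulation_def circle_triangulation_def by blast
  qed
  then show ?thesis
    using Delta_le[of n G T 0] by simp
qed

end

section \<open>Comparing two generating sets\<close>

locale symmetric_generating_set = group G for G :: "('a, 'b) monoid_scheme" (structure) +
  fixes T :: "'a set"
  assumes generators_closed: "T \<subseteq> carrier G"
    and generators_inv_closed: "\<forall>s\<in>T. inv s \<in> T"
    and generate_generators: "generate G T = carrier G"
begin

lemma word_exists:
  assumes "h \<in> carrier G"
  shows "\<exists>w. set w \<subseteq> T \<and> word_prod G w = h"
proof -
  have "h \<in> generate G T"
    using assms generate_generators by simp
  then show ?thesis
  proof (induction rule: generate.induct)
    case one
    show ?case by (intro exI[of _ "[]"]) simp
  next
    case (incl h)
    then show ?case using generators_closed by (intro exI[of _ "[h]"]) auto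
  next
    case (inv h)
    then show ?case
      using generators_closed generators_inv_closed by (intro exI[of _ "[inv h]"]) auto
  next
    case (eng h1 h2)
    then obtain w1 w2 where "set w1 \<subseteq> T" "word_prod G w1 = h1" "set w2 \<subseteq> T" "word_prod G w2 = h2"
      by blast
    then show ?case
      using generators_closed by (intro exI[of _ "w1 @ w2"]) (auto simp: word_prod_append)
  qed
qed

lemma shortest_word:
  assumes "g \<in> carrier G" "g' \<in> carrier G"
  obtains w where "set w \<subseteq> T" "length w = word_dist G T g g'" "word_prod G w = inv g \<otimes> g'"
proof -
  have "\<exists>n w. set w \<subseteq> T \<and> length w = n \<and> word_prod G w = inv g \<otimes> g'"
    using word_exists[of "inv g \<otimes> g'"] assms by blast
  from LeastI_ex[OF this] show thesis
    using that unfolding word_dist_def by blast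
qed

lemma word_dist_triangle:
  assumes "g \<in> carrier G" "g' \<in> carrier G" "g'' \<in> carrier G"
  shows "word_dist G T g g'' \<le> word_dist G T g g' + word_dist G T g' g''"
proof -
  obtain v where v: "set v \<subseteq> T" "length v = word_dist G T g g'" "word_prod G v = inv g \<otimes> g'"
    using shortest_word assms(1,2) .
  obtain w where w: "set w \<subseteq> T" "length w = word_dist G T g' g''" "word_prod G w = inv g' \<otimes> g''"
    using shortest_word assms(2,3) .
  have "word_prod G (v @ w) = (inv g \<otimes> g') \<otimes> (inv g' \<otimes> g'')"
    using v w generators_closed by (simp add: word_prod_append subset_trans)
  also have "\<dots> = inv g \<otimes> g''"
    using assms by (simp add: m_assoc[symmetric]) (simp add: m_assoc)
  finally have "word_dist G T g g'' \<le> length (v @ w)"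
    using v w by (intro word_dist_le) auto
  then show ?thesis
    using v w by simp
qed

lemma word_dist_sym:
  assumes "g \<in> carrier G" "g' \<in> carrier G"
  shows "word_dist G T g g' = word_dist G T g' g"
proof -
  have le: "word_dist G T h h' \<le> word_dist G T h' h" if hh': "h \<in> carrier G" "h' \<in> carrier G" for h h'
  proof -
    obtain w where w: "set w \<subseteq> T" "length w = word_dist G T h' h" "word_prod G w = inv h' \<otimes> h"
      using shortest_word hh'(2,1) .
    have "set (rev (map (\<lambda>s. inv s) w)) \<subseteq> T"
      using w(1) generators_inv_closed by auto
    moreover have "word_prod G (rev (map (\<lambda>s. inv s) w)) = inv h \<otimes> h'"
      using w generators_closed hh' by (simp add: word_prod_rev_inv subset_trans inv_mult_group)
    ultimately have "word_dist G T h h' \<le> length (rev (map (\<lambda>s. inv s) w))"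
      by (rule word_dist_le)
    then show ?thesis
      using w(2) by simp
  qed
  show ?thesis
    using le[OF assms] le[OF assms(2,1)] by (rule antisym)
qed

text \<open>Nonempty words keep the vertex positions of a subdivided cycle strictly increasing;
  the identity is written as \<open>t t\<^sup>-\<^sup>1\<close>.\<close>

lemma bounded_nonempty_words:
  assumes "finite S" "S \<subseteq> carrier G" "T \<noteq> {}"
  obtains L where
    "\<And>s. s \<in> S \<Longrightarrow> \<exists>w. set w \<subseteq> T \<and> w \<noteq> [] \<and> length w \<le> L \<and> word_prod G w = s"
proof -
  obtain t where t: "t \<in> T"
    using assms(3) by blast
  define L where "L = Max (insert 0 (word_dist G T \<one> ` S)) + 2"
  have "\<exists>w. set w \<subseteq> T \<and> w \<noteq> [] \<and> length w \<le> L \<and> word_prod G w = s" if s: "s \<in> S" for s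
  proof -
    obtain w where w: "set w \<subseteq> T" "length w = word_dist G T \<one> s" "word_prod G w = s"
      using shortest_word[of \<one> s] s assms(2) by auto
    have "length w + 2 \<le> L"
      using w(2) s assms(1) unfolding L_def by (simp add: Max_ge)
    show ?thesis
    proof (cases "w = []")
      case True
      have "word_prod G [t, inv t] = s"
        using True w(3) t generators_closed by auto
      then show ?thesis
        using t generators_inv_closed \<open>length w + 2 \<le> L\<close> by (intro exI[of _ "[t, inv t]"]) auto
    next
      case False
      then show ?thesis
        using w \<open>length w + 2 \<le> L\<close> by auto
    qed
  qed
  then show thesis by (rule that)
qed

lemma word_dist_le_mult_word_dist:
  assumes "symmetric_generating_set G T'" "finite T'"
  obtains M where
    "\<And>g h. g \<in> carrier G \<Longrightarrow> h \<in> carrier G \<Longrightarrow> word_dist G T g h \<le> M * word_dist G T' g h"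
proof -
  interpret T': symmetric_generating_set G T' by fact
  define M where "M = Max (insert 0 (word_dist G T \<one> ` T'))"
  have along_word: "word_dist G T g (g \<otimes> word_prod G w) \<le> M * length w"
    if "set w \<subseteq> T'" "g \<in> carrier G" for w g
    using that
  proof (induction w arbitrary: g)
    case Nil
    then show ?case using word_dist_le[of "[]" T G g g] by simp
  next
    case (Cons t w)
    have t: "t \<in> carrier G" "set w \<subseteq> carrier G"
      using Cons.prems(1) T'.generators_closed by auto
    then have "g \<otimes> word_prod G (t # w) = g \<otimes> t \<otimes> word_prod G w"
      using Cons.prems(2) by (simp add: m_assoc word_prod_closed)
    then have "word_dist G T g (g \<otimes> word_prod G (t # w))
        \<le> word_dist G T g (g \<otimes> t) + word_dist G T (g \<otimes> t) (g \<otimes> t \<otimes> word_prod G w)"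
      using t Cons.prems(2) by (simp add: word_dist_triangle word_prod_closed)
    also have "word_dist G T g (g \<otimes> t) = word_dist G T \<one> t"
      using word_dist_mult_left[of g \<one> t] t Cons.prems(2) by simp
    also have "\<dots> \<le> M"
      using Cons.prems(1) assms(2) unfolding M_def by (simp add: Max_ge)
    also have "word_dist G T (g \<otimes> t) (g \<otimes> t \<otimes> word_prod G w) \<le> M * length w"
      using Cons t by simp
    finally show ?case by simp
  qed
  show thesis
  proof (rule that)
    fix g h assume gh: "g \<in> carrier G" "h \<in> carrier G"
    obtain w where w: "set w \<subseteq> T'" "length w = word_dist G T' g h" "word_prod G w = inv g \<otimes> h"
      using T'.shortest_word gh .
    have "h = g \<otimes> word_prod G w"
      using w(3) gh by (simp add: m_assoc[symmetric])
    then show "word_dist G T g h \<le> M * word_dist G T' g h"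
      using along_word[OF w(1) gh(1)] w(2) by simp
  qed
qed

lemma has_k_triangulation_projection:
  assumes lip: "\<And>g h. g \<in> carrier G \<Longrightarrow> h \<in> carrier G \<Longrightarrow>
      word_dist G S g h \<le> M * word_dist G T g h"
    and x: "\<And>i. i \<le> N \<Longrightarrow> x i \<in> carrier G"
    and y: "cayley_cycle G T y (p N)" "has_k_triangulation G T y (p N) \<Delta>"
    and p: "p 0 = 0" "strict_mono_on {..N} p" "\<And>a. a < N \<Longrightarrow> p (Suc a) \<le> p a + L"
      "\<And>a. a \<le> N \<Longrightarrow> y (p a) = x a"
  shows "has_k_triangulation G S x N (M * (2 * L + 1 + \<Delta>))"
proof -
  let ?m = "p N" and ?\<phi> = "upper_inverse p"
  have m: "1 \<le> ?m" and y_carrier: "\<And>a. a \<le> ?m \<Longrightarrow> y a \<in> carrier G"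
    using y(1) by (simp_all add: cayley_cycle_def)
  obtain D' where D': "poly_tri 1 ?m D'" "\<forall>(a, b)\<in>D'. word_dist G T (y a) (y b) \<le> \<Delta>"
    using y(2) unfolding has_k_triangulation_def circle_triangulation_def by blast
  obtain D where D: "poly_tri 1 N D"
    "D \<subseteq> (\<lambda>(a, b). (?\<phi> a, ?\<phi> b)) ` (D' \<union> {(a, Suc a) | a. 1 \<le> a \<and> a < ?m})"
    using poly_tri_upper_inverse_image[OF D'(1) m p(1,2)] .
  have \<phi>_le: "?\<phi> a \<le> N" and near: "word_dist G T (y a) (x (?\<phi> a)) \<le> L"
    if "1 \<le> a" "a \<le> ?m" for a
  proof -
    show "?\<phi> a \<le> N"
      using upper_inverse_le(2)[of a p N] that by simp
    then show "word_dist G T (y a) (x (?\<phi> a)) \<le> L"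
      using word_dist_upper_inverse_le[OF generators_closed y(1) p(1-3) that] p(4)[of "?\<phi> a"] by simp
  qed
  have chord: "word_dist G S (x (?\<phi> a)) (x (?\<phi> b)) \<le> M * (2 * L + 1 + \<Delta>)"
    if ab: "(a, b) \<in> D' \<union> {(a, Suc a) | a. 1 \<le> a \<and> a < ?m}" for a b
  proof -
    have range: "1 \<le> a" "a < b" "b \<le> ?m"
      using ab poly_tri_range[OF D'(1)] by auto
    have edge: "word_dist G T (y a) (y b) \<le> \<Delta> + 1"
      using ab D'(2) word_dist_cycle_le[OF generators_closed y(1), of a b] by auto
    have carrier: "x (?\<phi> a) \<in> carrier G" "x (?\<phi> b) \<in> carrier G" "y a \<in> carrier G" "y b \<in> carrier G"
      using range x \<phi>_le y_carrier by auto
    have "word_dist G T (x (?\<phi> a)) (x (?\<phi> b))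
        \<le> word_dist G T (x (?\<phi> a)) (y a) + word_dist G T (y a) (y b) + word_dist G T (y b) (x (?\<phi> b))"
      using carrier word_dist_triangle by (meson add_le_mono le_refl order_trans)
    also have "\<dots> \<le> L + (\<Delta> + 1) + L"
      using near range carrier edge word_dist_sym by (intro add_mono) auto
    finally have "word_dist G T (x (?\<phi> a)) (x (?\<phi> b)) \<le> 2 * L + 1 + \<Delta>"
      by simp
    then show ?thesis
      by (rule order_trans[OF lip[OF carrier(1,2)] mult_le_mono2])
  qed
  have "word_dist G S (x c) (x d) \<le> M * (2 * L + 1 + \<Delta>)" if cd: "(c, d) \<in> D" for c d
  proof -
    obtain e where "(c, d) = (\<lambda>(a, b). (?\<phi> a, ?\<phi> b)) e"
      "e \<in> D' \<union> {(a, Suc a) | a. 1 \<le> a \<and> a < ?m}"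
      using subsetD[OF D(2) cd] by (rule imageE)
    then show ?thesis
      using chord by (cases e) simp
  qed
  then show ?thesis
    unfolding has_k_triangulation_def circle_triangulation_def
    using D(1) by (intro exI[of _ D] conjI) auto
qed

lemma has_k_triangulation_transfer:
  assumes words: "\<And>s. s \<in> S \<Longrightarrow>
      \<exists>w. set w \<subseteq> T \<and> w \<noteq> [] \<and> length w \<le> L \<and> word_prod G w = s"
    and lip: "\<And>g h. g \<in> carrier G \<Longrightarrow> h \<in> carrier G \<Longrightarrow>
      word_dist G S g h \<le> M * word_dist G T g h"
    and x: "cayley_cycle G S x N" "N \<le> n"
  shows "has_k_triangulation G S x N (M * (2 * L + 1 + Delta G T (L * n)))"
proof -
  have x_carrier: "\<And>i. i \<le> N \<Longrightarrow> x i \<in> carrier G" and "1 \<le> N" "x N = x 0"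
    using x(1) by (auto simp: cayley_cycle_def)
  obtain u where u: "\<And>i. 1 \<le> i \<Longrightarrow> i \<le> N \<Longrightarrow>
      set (u i) \<subseteq> T \<and> u i \<noteq> [] \<and> length (u i) \<le> L \<and>
      word_prod G (u i) = inv (x (i - 1)) \<otimes> x i"
    using cayley_cycle_edge_words[OF generators_closed x(1) words] by blast
  obtain y p where y: "cayley_cycle G T y (p N)" and p: "p 0 = 0" "strict_mono_on {..N} p"
    "\<And>a. a < N \<Longrightarrow> p (Suc a) = p a + length (u (Suc a))" "\<And>a. a \<le> N \<Longrightarrow> y (p a) = x a"
    using cayley_cycle_subdivision[OF generators_closed \<open>1 \<le> N\<close> x_carrier \<open>x N = x 0\<close>, of u] u
    by blast
  have p_step: "p (Suc a) \<le> p a + L" if "a < N" for a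
    using p(3)[OF that] u[of "Suc a"] that by simp
  have "p a \<le> L * a" if "a \<le> N" for a
    using that
  proof (induction a)
    case (Suc a)
    then show ?case using p_step[of a] by simp
  qed (simp add: p(1))
  then have "p N \<le> L * n"
    using x(2) by (meson mult_le_mono2 order_trans order_refl)
  then have "has_k_triangulation G T y (p N) (Delta G T (L * n))"
    using has_k_triangulation_Delta[OF generators_closed _ y] by blast
  then show ?thesis
    using has_k_triangulation_projection[OF lip x_carrier y _ p(1,2) p_step p(4)] by blast
qed

lemma Delta_le_scaled_Delta:
  assumes words: "\<And>s. s \<in> S \<Longrightarrow>
      \<exists>w. set w \<subseteq> T \<and> w \<noteq> [] \<and> length w \<le> L \<and> word_prod G w = s"
    and lip: "\<And>g h. g \<in> carrier G \<Longrightarrow> h \<in> carrier G \<Longrightarrow>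
      word_dist G S g h \<le> M * word_dist G T g h"
  defines "K \<equiv> M * (2 * L + 1) + L"
  shows "Delta G S n \<le> K * Delta G T (K * n) + K"
proof -
  have "Delta G S n \<le> M * (2 * L + 1 + Delta G T (L * n))"
    by (rule Delta_le) (rule has_k_triangulation_transfer[OF words lip])
  also have "\<dots> \<le> M * (2 * L + 1) + M * Delta G T (K * n)"
    using Delta_mono[OF generators_closed, of "L * n" "K * n"] by (simp add: K_def add_mult_distrib2)
  also have "\<dots> \<le> K + K * Delta G T (K * n)"
    unfolding K_def by (intro add_mono mult_le_mono1) auto
  finally show ?thesis by simp
qed

end

theorem lemma3p1:
  fixes G :: "('a, 'b) monoid_scheme" and S S' :: "'a set"
  assumes "group G"
    and "finite S" "S \<subseteq> carrier G" "generate G S = carrier G" "\<forall>s\<in>S. inv\<^bsub>G\<^esub> s \<in> S"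
    and "finite S'" "S' \<subseteq> carrier G" "generate G S' = carrier G" "\<forall>s\<in>S'. inv\<^bsub>G\<^esub> s \<in> S'"
  shows "\<exists>K::nat. \<forall>n\<ge>1. Delta G S n \<le> K * Delta G S' (K * n) + K"
proof -
  have S: "symmetric_generating_set G S" and S': "symmetric_generating_set G S'"
    using assms by (simp_all add: symmetric_generating_set_def symmetric_generating_set_axioms_def)
  interpret group G by (fact assms(1))
  interpret S: symmetric_generating_set G S by (fact S)
  interpret S': symmetric_generating_set G S' by (fact S')
  show ?thesis
  proof (cases "S' = {}")
    case True
    then have "carrier G = {\<one>\<^bsub>G\<^esub>}"
      using assms(8) generate_empty by simp
    then show ?thesis
      using Delta_trivial_group by auto
  next
    case False
    obtain L where words:
      "\<And>s. s \<in> S \<Longrightarrow> \<exists>w. set w \<subseteq> S' \<and> w \<noteq> [] \<and> length w \<le> L \<and> word_prod G w = s"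
      by (rule S'.bounded_nonempty_words[OF assms(2,3) False]) blast
    obtain M where lip: "\<And>g h. g \<in> carrier G \<Longrightarrow> h \<in> carrier G \<Longrightarrow>
        word_dist G S g h \<le> M * word_dist G S' g h"
      by (rule S.word_dist_le_mult_word_dist[OF S' assms(6)]) blast
    show ?thesis
      using S'.Delta_le_scaled_Delta[OF words lip] by blast
  qed
qed

end
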